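(* Let $G$ be a connected graph of order $n$, maximum degree $\Delta$, and diameter $d$. Then: (i) $\gamma_{e,f}^*(G)\ge \frac{d+3}{6}$; (ii) if $\Delta=3$, then $\gamma_{e,f}^*(G)\ge \frac{n}{2+3d}$; (iii) if $\Delta\ge 4$, then $\gamma_{e,f}^*(G)\ge \left(\dfrac{\frac{\Delta-1}{2}-1}{\Delta\left(\frac{\Delta-1}{2}\right)^d-3}\right)n$.
   Context: All graphs are finite, simple and undirected. The fractional porous exponential domination number $\gamma_{e,f}^*(G)$ is the optimum value of the linear program: minimize $\sum_{u\in V(G)}x(u)$ subject to $\sum_{u\in V(G)}\left(\frac12\right)^{\mathrm{dist}_G(u,v)-1}x(u)\ge 1$ for every $v\in V(G)$ and $x(u)\ge 0$ for every $u\in V(G)$, where $\mathrm{dist}_G$ is the usual graph distance. *)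

theory Defs
  imports Complex_Main
begin

definition simple_graph :: "'a set \<Rightarrow> ('a \<Rightarrow> 'a \<Rightarrow> bool) \<Rightarrow> bool" where
  "simple_graph V E \<longleftrightarrow> finite V \<and> (\<forall>u v. E u v \<longrightarrow> u \<in> V \<and> v \<in> V)
     \<and> (\<forall>u v. E u v \<longrightarrow> E v u) \<and> (\<forall>u. \<not> E u u)"

definition is_walk :: "'a set \<Rightarrow> ('a \<Rightarrow> 'a \<Rightarrow> bool) \<Rightarrow> 'a list \<Rightarrow> bool" where
  "is_walk V E p \<longleftrightarrow> p \<noteq> [] \<and> set p \<subseteq> V \<and> (\<forall>i. Suc i < length p \<longrightarrow> E (p ! i) (p ! Suc i))"

definition connected_graph :: "'a set \<Rightarrow> ('a \<Rightarrow> 'a \<Rightarrow> bool) \<Rightarrow> bool" where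
  "connected_graph V E \<longleftrightarrow> simple_graph V E \<and> V \<noteq> {} \<and>
     (\<forall>u\<in>V. \<forall>v\<in>V. \<exists>p. is_walk V E p \<and> hd p = u \<and> last p = v)"

definition gdist :: "'a set \<Rightarrow> ('a \<Rightarrow> 'a \<Rightarrow> bool) \<Rightarrow> 'a \<Rightarrow> 'a \<Rightarrow> nat" where
  "gdist V E u v = (LEAST k. \<exists>p. is_walk V E p \<and> hd p = u \<and> last p = v \<and> length p = Suc k)"

definition diameter :: "'a set \<Rightarrow> ('a \<Rightarrow> 'a \<Rightarrow> bool) \<Rightarrow> nat" where
  "diameter V E = Max {gdist V E u v | u v. u \<in> V \<and> v \<in> V}"

definition degree :: "'a set \<Rightarrow> ('a \<Rightarrow> 'a \<Rightarrow> bool) \<Rightarrow> 'a \<Rightarrow> nat" where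
  "degree V E u = card {v \<in> V. E u v}"

definition max_degree :: "'a set \<Rightarrow> ('a \<Rightarrow> 'a \<Rightarrow> bool) \<Rightarrow> nat" where
  "max_degree V E = Max (degree V E ` V)"

definition fped_feasible :: "'a set \<Rightarrow> ('a \<Rightarrow> 'a \<Rightarrow> bool) \<Rightarrow> ('a \<Rightarrow> real) \<Rightarrow> bool" where
  "fped_feasible V E x \<longleftrightarrow> (\<forall>u\<in>V. x u \<ge> 0) \<and>
     (\<forall>v\<in>V. (\<Sum>u\<in>V. (1/2::real) powi (int (gdist V E u v) - 1) * x u) \<ge> 1)"

definition frac_porous_exp_dom :: "'a set \<Rightarrow> ('a \<Rightarrow> 'a \<Rightarrow> bool) \<Rightarrow> real" where
  "frac_porous_exp_dom V E = Inf {(\<Sum>u\<in>V. x u) | x. fped_feasible V E x}"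

end

theory Submission
  imports Defs
begin

text \<open>Every bound is obtained by weak LP duality: a nonnegative weighting c of vertices
  whose exponential influence on every vertex u is at most 1, i.e.
  \<open>\<Sum>w c w * 2 * (1/2)^dist(u,w) \<le> 1\<close>, bounds every feasible solution from below by \<open>\<Sum>w c w\<close>.
  For (i), put weight 1/6 on each vertex \<open>P 0, \<dots>, P d\<close> of a diametral path and an extra
  1/6 on both ends. The distances \<open>f i\<close> from u to \<open>P i\<close> satisfy \<open>|i - j| \<le> f i + f j\<close>, so by
  a Helly property of integer intervals some j has \<open>|i - j| \<le> f i\<close> for all i: the influence on u
  is at most the influence on \<open>P j\<close>, which is exactly 1. For (ii) and (iii), put
  weight \<open>1/B\<close> on every vertex, where B bounds the influence of all of V on a single vertex:
  the sphere of radius k+1 has at most \<open>\<Delta>(\<Delta>-1)^k\<close> vertices.\<close>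

subsection \<open>Walks and graph distance\<close>

lemma connected_graph_finite: "connected_graph V E \<Longrightarrow> finite V"
  by (simp add: connected_graph_def simple_graph_def)

lemma connected_graph_edge_in:
  "connected_graph V E \<Longrightarrow> E a b \<Longrightarrow> a \<in> V \<and> b \<in> V"
  by (auto simp: connected_graph_def simple_graph_def)

lemma connected_graph_edge_sym: "connected_graph V E \<Longrightarrow> E a b \<Longrightarrow> E b a"
  by (auto simp: connected_graph_def simple_graph_def)

lemma is_walk_snoc:
  assumes "is_walk V E p" "E (last p) w" "w \<in> V"
  shows "is_walk V E (p @ [w])"
  unfolding is_walk_def
proof (intro conjI allI impI)
  show "set (p @ [w]) \<subseteq> V" using assms by (auto simp: is_walk_def)
next
  fix i assume i: "Suc i < length (p @ [w])"
  have "p \<noteq> []" using assms(1) by (simp add: is_walk_def)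
  show "E ((p @ [w]) ! i) ((p @ [w]) ! Suc i)"
  proof (cases "Suc i < length p")
    case True
    then show ?thesis using assms(1) by (simp add: is_walk_def nth_append)
  next
    case False
    with i have "Suc i = length p" by simp
    then have "i = length p - 1" by simp
    then have "p ! i = last p" using \<open>p \<noteq> []\<close> by (simp add: last_conv_nth)
    then show ?thesis using assms(2) \<open>Suc i = length p\<close> by (simp add: nth_append)
  qed
qed simp

lemma gdist_le_walk_length:
  assumes "is_walk V E p" "hd p = u" "last p = v"
  shows "gdist V E u v \<le> length p - 1"
proof -
  have "length p = Suc (length p - 1)" using assms(1) by (simp add: is_walk_def)
  then show ?thesis unfolding gdist_def using assms by (intro Least_le) blast
qed

lemma shortest_walk_exists:
  assumes "connected_graph V E" "u \<in> V" "v \<in> V"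
  shows "\<exists>p. is_walk V E p \<and> hd p = u \<and> last p = v \<and> length p = Suc (gdist V E u v)"
proof -
  obtain p where p: "is_walk V E p" "hd p = u" "last p = v"
    using assms unfolding connected_graph_def by blast
  then have "length p = Suc (length p - 1)" by (simp add: is_walk_def)
  with p have "\<exists>k p. is_walk V E p \<and> hd p = u \<and> last p = v \<and> length p = Suc k" by blast
  then show ?thesis unfolding gdist_def by (rule LeastI_ex)
qed

lemma gdist_self: "u \<in> V \<Longrightarrow> gdist V E u u = 0"
  using gdist_le_walk_length[of V E "[u]" u u] by (simp add: is_walk_def)

lemma gdist_eq_0_imp_eq:
  assumes "connected_graph V E" "u \<in> V" "v \<in> V" "gdist V E u v = 0"
  shows "u = v"
proof -
  obtain p where "is_walk V E p" "hd p = u" "last p = v" "length p = 1"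
    using shortest_walk_exists[OF assms(1-3)] assms(4) by auto
  then show ?thesis by (cases p) auto
qed

lemma gdist_edge_le:
  assumes "connected_graph V E" "u \<in> V" "v \<in> V" "E v w"
  shows "gdist V E u w \<le> gdist V E u v + 1"
proof -
  obtain p where p: "is_walk V E p" "hd p = u" "last p = v" "length p = Suc (gdist V E u v)"
    using shortest_walk_exists[OF assms(1-3)] by blast
  have "is_walk V E (p @ [w])"
    using is_walk_snoc[OF p(1)] p(3) assms(4) connected_graph_edge_in[OF assms(1,4)] by simp
  moreover have "hd (p @ [w]) = u" using p by (cases p) (auto simp: is_walk_def)
  ultimately have "gdist V E u w \<le> length (p @ [w]) - 1"
    using gdist_le_walk_length by fastforce
  then show ?thesis using p(4) by simp
qed

lemma gdist_Suc_predecessor: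
  assumes "connected_graph V E" "u \<in> V" "v \<in> V" "gdist V E u v = Suc k"
  obtains w where "w \<in> V" "E w v" "gdist V E u w = k"
proof -
  obtain p where p: "is_walk V E p" "hd p = u" "last p = v" "length p = Suc (Suc k)"
    using shortest_walk_exists[OF assms(1-3)] assms(4) by auto
  define q where "q = take (Suc k) p"
  have "is_walk V E q" using p unfolding q_def is_walk_def by (auto dest: in_set_takeD)
  moreover have "hd q = u" using p unfolding q_def by (cases p) auto
  moreover have "last q = p ! k" using p unfolding q_def by (subst last_conv_nth) auto
  ultimately have le: "gdist V E u (p ! k) \<le> k"
    using gdist_le_walk_length[of V E q] p(4) unfolding q_def by fastforce
  have e: "E (p ! k) v" and wV: "p ! k \<in> V"
    using p by (auto simp: is_walk_def last_conv_nth)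
  have "Suc k \<le> gdist V E u (p ! k) + 1"
    using gdist_edge_le[OF assms(1,2) wV e] assms(4) by simp
  with le have "gdist V E u (p ! k) = k" by simp
  with wV e show thesis by (rule that)
qed

lemma gdist_triangle:
  assumes "connected_graph V E" "u \<in> V" "v \<in> V" "w \<in> V"
  shows "gdist V E u w \<le> gdist V E u v + gdist V E v w"
  using assms(4)
proof (induction "gdist V E v w" arbitrary: w)
  case 0
  then show ?case using gdist_eq_0_imp_eq[OF assms(1,3)] by fastforce
next
  case (Suc k)
  obtain w' where w': "w' \<in> V" "E w' w" "gdist V E v w' = k"
    using gdist_Suc_predecessor[OF assms(1,3) Suc.prems Suc.hyps(2)[symmetric]] .
  have "gdist V E u w' \<le> gdist V E u v + k" using Suc.hyps(1)[of w'] w' by simp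
  moreover have "gdist V E u w \<le> gdist V E u w' + 1"
    using gdist_edge_le[OF assms(1,2) w'(1,2)] .
  ultimately show ?case using Suc.hyps(2) by simp
qed

lemma gdist_commute_le:
  assumes "connected_graph V E" "u \<in> V" "v \<in> V"
  shows "gdist V E v u \<le> gdist V E u v"
  using assms(3)
proof (induction "gdist V E u v" arbitrary: v)
  case 0
  then show ?case using gdist_eq_0_imp_eq[OF assms(1,2)] by fastforce
next
  case (Suc k)
  obtain w where w: "w \<in> V" "E w v" "gdist V E u w = k"
    using gdist_Suc_predecessor[OF assms(1,2) Suc.prems Suc.hyps(2)[symmetric]] .
  have "gdist V E w u \<le> k" using Suc.hyps(1)[of w] w by simp
  moreover have "gdist V E v w \<le> 1"
    using gdist_edge_le[OF assms(1) Suc.prems Suc.prems connected_graph_edge_sym[OF assms(1) w(2)]]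
      gdist_self[OF Suc.prems, of E] by simp
  moreover have "gdist V E v u \<le> gdist V E v w + gdist V E w u"
    using gdist_triangle[OF assms(1) Suc.prems w(1) assms(2)] .
  ultimately show ?case using Suc.hyps(2) by simp
qed

lemma gdist_commute:
  assumes "connected_graph V E" "u \<in> V" "v \<in> V"
  shows "gdist V E v u = gdist V E u v"
  using gdist_commute_le[OF assms] gdist_commute_le[OF assms(1,3,2)] by simp

lemma
  assumes "connected_graph V E"
  shows gdist_le_diameter: "\<And>u v. u \<in> V \<Longrightarrow> v \<in> V \<Longrightarrow> gdist V E u v \<le> diameter V E"
    and diameter_attained: "\<exists>a\<in>V. \<exists>b\<in>V. gdist V E a b = diameter V E"
proof -
  let ?D = "{gdist V E u v | u v. u \<in> V \<and> v \<in> V}"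
  have "?D = (\<lambda>(u,v). gdist V E u v) ` (V \<times> V)" by auto
  then have fin: "finite ?D" using connected_graph_finite[OF assms] by simp
  have ne: "?D \<noteq> {}" using assms unfolding connected_graph_def by blast
  show "\<And>u v. u \<in> V \<Longrightarrow> v \<in> V \<Longrightarrow> gdist V E u v \<le> diameter V E"
    unfolding diameter_def using fin by (intro Max_ge) auto
  show "\<exists>a\<in>V. \<exists>b\<in>V. gdist V E a b = diameter V E"
    using Max_in[OF fin ne] unfolding diameter_def by (smt (verit) mem_Collect_eq)
qed

subsection \<open>Weak duality\<close>

lemma half_powi_diff_one: "(1/2::real) powi (int k - 1) = 2 * (1/2) ^ k"
proof (cases k)
  case (Suc m)
  then have "int k - 1 = int m" by simp
  then show ?thesis using Suc by (simp add: power_int_of_nat)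
qed simp

lemma fped_feasible_const_one:
  assumes "connected_graph V E"
  shows "fped_feasible V E (\<lambda>_. 1)"
  unfolding fped_feasible_def
proof (intro conjI ballI)
  fix v assume v: "v \<in> V"
  have "(1/2::real) powi (int (gdist V E v v) - 1) * 1
      \<le> (\<Sum>u\<in>V. (1/2::real) powi (int (gdist V E u v) - 1) * 1)"
    by (rule member_le_sum[OF v _ connected_graph_finite[OF assms]]) (simp add: half_powi_diff_one)
  then show "1 \<le> (\<Sum>u\<in>V. (1/2::real) powi (int (gdist V E u v) - 1) * 1)"
    using gdist_self[OF v, of E] by (simp add: half_powi_diff_one)
qed simp

lemma le_frac_porous_exp_dom:
  assumes "connected_graph V E"
    and "\<And>x. fped_feasible V E x \<Longrightarrow> L \<le> (\<Sum>u\<in>V. x u)"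
  shows "L \<le> frac_porous_exp_dom V E"
  unfolding frac_porous_exp_dom_def
  using fped_feasible_const_one[OF assms(1)] assms(2) by (intro cInf_greatest) auto

lemma fped_weak_duality:
  assumes "fped_feasible V E x" "finite I"
    and p: "\<And>i. i \<in> I \<Longrightarrow> p i \<in> V"
    and c: "\<And>i. i \<in> I \<Longrightarrow> c i \<ge> 0"
    and dual: "\<And>u. u \<in> V \<Longrightarrow> (\<Sum>i\<in>I. c i * (2 * (1/2::real) ^ gdist V E u (p i))) \<le> 1"
  shows "(\<Sum>i\<in>I. c i) \<le> (\<Sum>u\<in>V. x u)"
proof -
  have x: "\<And>u. u \<in> V \<Longrightarrow> x u \<ge> 0"
    and primal: "\<And>v. v \<in> V \<Longrightarrow> 1 \<le> (\<Sum>u\<in>V. 2 * (1/2::real) ^ gdist V E u v * x u)"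
    using assms(1) by (simp_all add: fped_feasible_def half_powi_diff_one)
  have "(\<Sum>i\<in>I. c i) \<le> (\<Sum>i\<in>I. c i * (\<Sum>u\<in>V. 2 * (1/2::real) ^ gdist V E u (p i) * x u))"
    by (rule sum_mono) (use c primal p in \<open>metis mult.right_neutral mult_left_mono\<close>)
  also have "\<dots> = (\<Sum>u\<in>V. x u * (\<Sum>i\<in>I. c i * (2 * (1/2::real) ^ gdist V E u (p i))))"
    by (simp add: sum_distrib_left sum_distrib_right sum.swap[of _ I V] mult_ac)
  also have "\<dots> \<le> (\<Sum>u\<in>V. x u)"
    by (rule sum_mono) (use x dual in \<open>metis mult.right_neutral mult_left_mono\<close>)
  finally show ?thesis .
qed

subsection \<open>The diameter bound\<close>

definition nat_dist :: "nat \<Rightarrow> nat \<Rightarrow> nat" where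
  "nat_dist i j = (if i \<le> j then j - i else i - j)"

text \<open>Helly property of the intervals \<open>[i - f i, i + f i]\<close>: pairwise intersecting
  implies a common point, which can be taken in \<open>{0..d}\<close>.\<close>

lemma nat_dist_common_center:
  fixes f :: "nat \<Rightarrow> nat"
  assumes "\<And>i j. i \<le> d \<Longrightarrow> j \<le> d \<Longrightarrow> nat_dist i j \<le> f i + f j"
  obtains j where "j \<le> d" "\<And>i. i \<le> d \<Longrightarrow> nat_dist i j \<le> f i"
proof -
  define L where "L = Max ((\<lambda>i. int i - int (f i)) ` {0..d})"
  define R where "R = Min ((\<lambda>i. int i + int (f i)) ` {0..d})"
  obtain a where a: "a \<le> d" "L = int a - int (f a)"
    using Max_in[of "(\<lambda>i. int i - int (f i)) ` {0..d}"] unfolding L_def by fastforce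
  obtain b where b: "b \<le> d" "R = int b + int (f b)"
    using Min_in[of "(\<lambda>i. int i + int (f i)) ` {0..d}"] unfolding R_def by fastforce
  have "L \<le> R" using assms[OF a(1) b(1)] a b unfolding nat_dist_def by (auto split: if_splits)
  have L: "\<And>i. i \<le> d \<Longrightarrow> int i - int (f i) \<le> L" unfolding L_def by (intro Max_ge) auto
  have R: "\<And>i. i \<le> d \<Longrightarrow> R \<le> int i + int (f i)" unfolding R_def by (intro Min_le) auto
  define j where "j = nat (max L 0)"
  have j: "L \<le> int j" "int j \<le> R" using \<open>L \<le> R\<close> b unfolding j_def by auto
  show thesis
  proof (rule that)
    show "j \<le> d" using a unfolding j_def by simp
    show "nat_dist i j \<le> f i" if "i \<le> d" for i
      using j L[OF that] R[OF that] unfolding nat_dist_def by (auto split: if_splits)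
  qed
qed

lemma sum_half_power_before: "(\<Sum>i<j. (1/2::real) ^ (j - i)) = 1 - (1/2) ^ j"
proof (induction j)
  case (Suc j)
  have "(\<Sum>i<j. (1/2::real) ^ (Suc j - i)) = (1/2) * (\<Sum>i<j. (1/2::real) ^ (j - i))"
    by (simp add: sum_distrib_left Suc_diff_le less_imp_le)
  then show ?case using Suc.IH by simp
qed simp

lemma sum_half_power_from: "(\<Sum>i\<in>{j..j+m}. (1/2::real) ^ (i - j)) = 2 - (1/2) ^ m"
proof (induction m)
  case (Suc m)
  have "{j..j + Suc m} = insert (j + Suc m) {j..j+m}" by auto
  then show ?case using Suc.IH by simp
qed simp

lemma path_influence_eq_3:
  assumes "j \<le> d"
  shows "(\<Sum>i\<in>{0..d}. (1/2::real) ^ nat_dist i j) + (1/2) ^ nat_dist 0 j + (1/2) ^ nat_dist d j = 3"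
proof -
  have "{0..d} = {..<j} \<union> {j..j+(d-j)}" using assms by auto
  then have "(\<Sum>i\<in>{0..d}. (1/2::real) ^ nat_dist i j)
      = (\<Sum>i<j. (1/2::real) ^ nat_dist i j) + (\<Sum>i\<in>{j..j+(d-j)}. (1/2::real) ^ nat_dist i j)"
    by (simp add: sum.union_disjoint ivl_disj_int_one(4))
  also have "\<dots> = (\<Sum>i<j. (1/2::real) ^ (j - i)) + (\<Sum>i\<in>{j..j+(d-j)}. (1/2::real) ^ (i - j))"
    by (intro arg_cong2[where f = "(+)"] sum.cong) (auto simp: nat_dist_def)
  also have "\<dots> = 3 - (1/2) ^ j - (1/2) ^ (d - j)"
    by (simp only: sum_half_power_before sum_half_power_from)
  finally show ?thesis using assms by (simp add: nat_dist_def)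
qed

lemma path_influence_le_3:
  fixes f :: "nat \<Rightarrow> nat"
  assumes "\<And>i j. i \<le> d \<Longrightarrow> j \<le> d \<Longrightarrow> nat_dist i j \<le> f i + f j"
  shows "(\<Sum>i\<in>{0..d}. (1/2::real) ^ f i) + (1/2) ^ f 0 + (1/2) ^ f d \<le> 3"
proof -
  obtain j where j: "j \<le> d" "\<And>i. i \<le> d \<Longrightarrow> nat_dist i j \<le> f i"
    using nat_dist_common_center[OF assms] by blast
  have mono: "(1/2::real) ^ f i \<le> (1/2) ^ nat_dist i j" if "i \<le> d" for i
    using j(2)[OF that] by (intro power_decreasing) auto
  have "(\<Sum>i\<in>{0..d}. (1/2::real) ^ f i) \<le> (\<Sum>i\<in>{0..d}. (1/2::real) ^ nat_dist i j)"
    by (intro sum_mono mono) simp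
  then show ?thesis using path_influence_eq_3[OF j(1)] mono[of 0] mono[of d] by linarith
qed

lemma diametral_geodesic_exists:
  assumes conn: "connected_graph V E"
  obtains P where "\<And>i. i \<le> diameter V E \<Longrightarrow> P i \<in> V"
    and "\<And>i j. i \<le> diameter V E \<Longrightarrow> j \<le> diameter V E \<Longrightarrow> nat_dist i j \<le> gdist V E (P i) (P j)"
proof -
  define d where "d = diameter V E"
  obtain a b where ab: "a \<in> V" "b \<in> V" "gdist V E a b = d"
    using diameter_attained[OF conn] d_def by blast
  obtain p where p: "is_walk V E p" "hd p = a" "last p = b" "length p = Suc d"
    using shortest_walk_exists[OF conn ab(1,2)] ab(3) by blast
  define P where "P i = p ! i" for i
  have PV: "\<And>i. i \<le> d \<Longrightarrow> P i \<in> V" using p unfolding P_def is_walk_def by (auto simp: subset_iff)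
  have P0: "P 0 = a" using p unfolding P_def by (cases p) auto
  have Pd: "P d = b" using p unfolding P_def by (metis diff_Suc_1 last_conv_nth list.size(3) nat.simps(3))
  have PE: "\<And>i. i < d \<Longrightarrow> E (P i) (P (Suc i))" using p unfolding P_def is_walk_def by auto
  have along: "gdist V E (P i) (P (i + k)) \<le> k" if "i + k \<le> d" for i k
    using that
  proof (induction k)
    case (Suc k)
    then show ?case using gdist_edge_le[OF conn PV PV PE, of i "i + k"] by simp
  qed (simp add: gdist_self[OF PV])
  have geodesic: "k \<le> gdist V E (P i) (P (i + k))" if "i + k \<le> d" for i k
  proof -
    have "d \<le> gdist V E a (P i) + gdist V E (P i) (P (i+k)) + gdist V E (P (i+k)) b"
      using gdist_triangle[OF conn ab(1) PV[of i] ab(2)]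
        gdist_triangle[OF conn PV[of i] PV[of "i+k"] ab(2)] ab(3) that by simp
    moreover have "gdist V E a (P i) \<le> i" using along[of 0 i] that P0 by simp
    moreover have "gdist V E (P (i+k)) b \<le> d - (i+k)" using along[of "i+k" "d-(i+k)"] that Pd by simp
    ultimately show ?thesis using that by linarith
  qed
  show thesis
  proof (rule that)
    show "P i \<in> V" if "i \<le> diameter V E" for i using PV that d_def by simp
  next
    fix i j assume "i \<le> diameter V E" "j \<le> diameter V E"
    then have ij: "i \<le> d" "j \<le> d" using d_def by simp_all
    show "nat_dist i j \<le> gdist V E (P i) (P j)"
    proof (cases "i \<le> j")
      case True
      then show ?thesis using geodesic[of i "j - i"] ij unfolding nat_dist_def by simp
    next
      case False
      then show ?thesis using geodesic[of j "i - j"] ij gdist_commute[OF conn PV PV, of i j]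
        unfolding nat_dist_def by simp
    qed
  qed
qed

lemma diameter_lower_bound:
  assumes conn: "connected_graph V E"
  shows "(real (diameter V E) + 3) / 6 \<le> frac_porous_exp_dom V E"
proof (rule le_frac_porous_exp_dom[OF conn])
  define d where "d = diameter V E"
  obtain P where PV: "\<And>i. i \<le> d \<Longrightarrow> P i \<in> V"
    and geodesic: "\<And>i j. i \<le> d \<Longrightarrow> j \<le> d \<Longrightarrow> nat_dist i j \<le> gdist V E (P i) (P j)"
    using diametral_geodesic_exists[OF conn] unfolding d_def by blast
  define c where "c i = (1 + (if i = 0 then 1 else 0) + (if i = d then 1 else 0)) / (6::real)" for i
  have "(\<Sum>i\<in>{0..d}. c i) = (\<Sum>i\<in>{0..d}. 1/6 + (if i = 0 then 1/6 else 0) + (if i = d then 1/6 else (0::real)))"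
    unfolding c_def by (rule sum.cong) auto
  then have c_sum: "(\<Sum>i\<in>{0..d}. c i) = (real d + 3) / 6" by (simp add: sum.distrib)
  fix x assume x: "fped_feasible V E x"
  have "(\<Sum>i\<in>{0..d}. c i) \<le> (\<Sum>u\<in>V. x u)"
  proof (rule fped_weak_duality[OF x])
    fix u assume u: "u \<in> V"
    define f where "f i = gdist V E u (P i)" for i
    have "nat_dist i j \<le> f i + f j" if "i \<le> d" "j \<le> d" for i j
      using geodesic[OF that] gdist_triangle[OF conn PV[OF that(1)] u PV[OF that(2)]]
        gdist_commute[OF conn u PV[OF that(1)]] unfolding f_def by simp
    then have "(\<Sum>i\<in>{0..d}. (1/2::real) ^ f i) + (1/2) ^ f 0 + (1/2) ^ f d \<le> 3"
      by (rule path_influence_le_3)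
    moreover have "(\<Sum>i\<in>{0..d}. c i * (2 * (1/2::real) ^ gdist V E u (P i)))
        = (\<Sum>i\<in>{0..d}. (1/2::real) ^ f i / 3 + (if i = 0 then (1/2::real) ^ f i / 3 else 0)
            + (if i = d then (1/2::real) ^ f i / 3 else 0))"
      unfolding c_def f_def by (rule sum.cong) (auto simp: field_simps)
    moreover have "\<dots> = ((\<Sum>i\<in>{0..d}. (1/2::real) ^ f i) + (1/2) ^ f 0 + (1/2) ^ f d) / 3"
      by (simp add: sum.distrib sum_divide_distrib[symmetric])
    ultimately show "(\<Sum>i\<in>{0..d}. c i * (2 * (1/2::real) ^ gdist V E u (P i))) \<le> 1" by simp
  qed (auto simp: PV c_def)
  then show "(real (diameter V E) + 3) / 6 \<le> (\<Sum>u\<in>V. x u)" using c_sum d_def by simp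
qed

subsection \<open>The order bounds\<close>

definition gsphere :: "'a set \<Rightarrow> ('a \<Rightarrow> 'a \<Rightarrow> bool) \<Rightarrow> 'a \<Rightarrow> nat \<Rightarrow> 'a set" where
  "gsphere V E u k = {v \<in> V. gdist V E u v = k}"

definition influence_bound :: "nat \<Rightarrow> nat \<Rightarrow> real" where
  "influence_bound \<Delta> d = 2 + real \<Delta> * (\<Sum>k<d. ((real \<Delta> - 1) / 2) ^ k)"

lemma card_neighbours_le_max_degree:
  assumes "connected_graph V E" "w \<in> V"
  shows "card {v \<in> V. E w v} \<le> max_degree V E"
  unfolding max_degree_def degree_def using connected_graph_finite[OF assms(1)] assms(2)
  by (intro Max_ge) auto

lemma finite_gsphere: "connected_graph V E \<Longrightarrow> finite (gsphere V E u k)"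
  by (simp add: gsphere_def connected_graph_finite)

lemma gsphere_0_subset: "connected_graph V E \<Longrightarrow> u \<in> V \<Longrightarrow> gsphere V E u 0 \<subseteq> {u}"
  using gdist_eq_0_imp_eq[of V E u] by (auto simp: gsphere_def)

text \<open>Every vertex of the sphere of radius k+1 has a neighbour in the sphere of radius k,
  so it has at most \<open>\<Delta> - 1\<close> neighbours in the sphere of radius k+2.\<close>

lemma card_gsphere_Suc_le:
  assumes conn: "connected_graph V E" and u: "u \<in> V"
  shows "card (gsphere V E u (Suc k)) \<le> max_degree V E * (max_degree V E - 1) ^ k"
proof (induction k)
  case 0
  have "gsphere V E u (Suc 0) \<subseteq> {v \<in> V. E u v}"
  proof
    fix v assume v: "v \<in> gsphere V E u (Suc 0)"
    then obtain w where "w \<in> V" "E w v" "gdist V E u w = 0"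
      using gdist_Suc_predecessor[OF conn u] unfolding gsphere_def by blast
    then show "v \<in> {v \<in> V. E u v}" using v gdist_eq_0_imp_eq[OF conn u] unfolding gsphere_def by auto
  qed
  then have "card (gsphere V E u (Suc 0)) \<le> card {v \<in> V. E u v}"
    by (rule card_mono[rotated]) (simp add: connected_graph_finite[OF conn])
  then show ?case using card_neighbours_le_max_degree[OF conn u] by simp
next
  case (Suc k)
  let ?S = "gsphere V E u" and ?\<Delta> = "max_degree V E"
  define N where "N w = {v \<in> V. E w v}" for w
  have cover: "?S (Suc (Suc k)) \<subseteq> (\<Union>w\<in>?S (Suc k). N w \<inter> ?S (Suc (Suc k)))"
  proof
    fix v assume v: "v \<in> ?S (Suc (Suc k))"
    then obtain w where "w \<in> V" "E w v" "gdist V E u w = Suc k"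
      using gdist_Suc_predecessor[OF conn u] unfolding gsphere_def by blast
    then show "v \<in> (\<Union>w\<in>?S (Suc k). N w \<inter> ?S (Suc (Suc k)))"
      using v unfolding gsphere_def N_def by auto
  qed
  have branching: "card (N w \<inter> ?S (Suc (Suc k))) \<le> ?\<Delta> - 1" if w: "w \<in> ?S (Suc k)" for w
  proof -
    have wV: "w \<in> V" using w unfolding gsphere_def by simp
    obtain z where z: "z \<in> V" "E z w" "gdist V E u z = k"
      using gdist_Suc_predecessor[OF conn u wV] w unfolding gsphere_def by auto
    have "N w \<inter> ?S (Suc (Suc k)) \<subseteq> N w - {z}" using z unfolding gsphere_def by auto
    then have "card (N w \<inter> ?S (Suc (Suc k))) \<le> card (N w - {z})"
      by (rule card_mono[rotated]) (simp add: connected_graph_finite[OF conn] N_def)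
    also have "\<dots> = card (N w) - 1"
      using z connected_graph_edge_sym[OF conn z(2)] unfolding N_def by simp
    also have "\<dots> \<le> ?\<Delta> - 1" using card_neighbours_le_max_degree[OF conn wV] unfolding N_def by simp
    finally show ?thesis .
  qed
  have "card (?S (Suc (Suc k))) \<le> card (\<Union>w\<in>?S (Suc k). N w \<inter> ?S (Suc (Suc k)))"
    by (rule card_mono[OF _ cover]) (simp add: finite_gsphere[OF conn])
  also have "\<dots> \<le> (\<Sum>w\<in>?S (Suc k). card (N w \<inter> ?S (Suc (Suc k))))"
    by (rule card_UN_le[OF finite_gsphere[OF conn]])
  also have "\<dots> \<le> card (?S (Suc k)) * (?\<Delta> - 1)"
    using sum_mono[of "?S (Suc k)", OF branching] by simp
  also have "\<dots> \<le> ?\<Delta> * (?\<Delta> - 1) ^ k * (?\<Delta> - 1)"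
    using Suc.IH by (rule mult_right_mono) simp
  finally show ?case by (simp add: mult_ac)
qed

lemma influence_sum_le_influence_bound:
  assumes conn: "connected_graph V E" and u: "u \<in> V" and \<Delta>: "max_degree V E \<ge> 1"
  shows "(\<Sum>v\<in>V. 2 * (1/2::real) ^ gdist V E u v) \<le> influence_bound (max_degree V E) (diameter V E)"
proof -
  define d where "d = diameter V E"
  define D where "D = max_degree V E"
  let ?S = "gsphere V E u"
  have "gdist V E u ` V \<subseteq> {..<Suc d}"
    using gdist_le_diameter[OF conn u] unfolding d_def by (auto simp: less_Suc_eq_le)
  then have "(\<Sum>v\<in>V. 2 * (1/2::real) ^ gdist V E u v)
      = (\<Sum>k\<in>{..<Suc d}. \<Sum>v\<in>?S k. 2 * (1/2::real) ^ gdist V E u v)"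
    unfolding gsphere_def by (intro sum.group[symmetric] connected_graph_finite[OF conn]) simp
  also have "\<dots> = (\<Sum>k\<in>{..<Suc d}. real (card (?S k)) * (2 * (1/2::real) ^ k))"
    by (rule sum.cong) (auto simp: gsphere_def)
  also have "\<dots> = real (card (?S 0)) * 2 + (\<Sum>k<d. real (card (?S (Suc k))) * (1/2::real) ^ k)"
    by (simp add: sum.lessThan_Suc_shift del: sum.lessThan_Suc)
  also have "\<dots> \<le> 2 + (\<Sum>k<d. real D * ((real D - 1) / 2) ^ k)"
  proof (rule add_mono)
    have "card (?S 0) \<le> 1"
      using card_mono[OF _ gsphere_0_subset[OF conn u]] by simp
    then show "real (card (?S 0)) * 2 \<le> 2" by simp
  next
    have "real (card (?S (Suc k))) \<le> real D * (real D - 1) ^ k" for k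
    proof -
      have "real (card (?S (Suc k))) \<le> real (D * (D - 1) ^ k)"
        using card_gsphere_Suc_le[OF conn u] unfolding D_def by (rule of_nat_mono)
      also have "\<dots> = real D * (real D - 1) ^ k" using \<Delta> unfolding D_def by (simp add: of_nat_diff)
      finally show ?thesis .
    qed
    then have "real (card (?S (Suc k))) * (1/2::real) ^ k \<le> real D * (real D - 1) ^ k * (1/2) ^ k" for k
      by (rule mult_right_mono) simp
    then show "(\<Sum>k<d. real (card (?S (Suc k))) * (1/2::real) ^ k) \<le> (\<Sum>k<d. real D * ((real D - 1) / 2) ^ k)"
      by (intro sum_mono) (simp add: power_divide)
  qed
  finally show ?thesis unfolding influence_bound_def d_def D_def by (simp add: sum_distrib_left)
qed

lemma order_lower_bound:
  assumes conn: "connected_graph V E" and \<Delta>: "max_degree V E \<ge> 1"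
  shows "real (card V) / influence_bound (max_degree V E) (diameter V E) \<le> frac_porous_exp_dom V E"
proof (rule le_frac_porous_exp_dom[OF conn])
  let ?B = "influence_bound (max_degree V E) (diameter V E)"
  have "?B \<ge> 2" unfolding influence_bound_def using \<Delta> by (simp add: sum_nonneg)
  fix x assume x: "fped_feasible V E x"
  have "(\<Sum>v\<in>V. 1 / ?B) \<le> (\<Sum>u\<in>V. x u)"
  proof (rule fped_weak_duality[OF x connected_graph_finite[OF conn], of id])
    fix u assume u: "u \<in> V"
    have "(\<Sum>v\<in>V. 1 / ?B * (2 * (1/2) ^ gdist V E u (id v))) = (\<Sum>v\<in>V. 2 * (1/2::real) ^ gdist V E u v) / ?B"
      by (simp add: sum_divide_distrib)
    also have "\<dots> \<le> 1"
      using influence_sum_le_influence_bound[OF conn u \<Delta>] \<open>?B \<ge> 2\<close> by simp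
    finally show "(\<Sum>v\<in>V. 1 / ?B * (2 * (1/2) ^ gdist V E u (id v))) \<le> 1" .
  qed (use \<open>?B \<ge> 2\<close> in auto)
  then show "real (card V) / ?B \<le> (\<Sum>u\<in>V. x u)" by simp
qed

lemma influence_bound_3: "influence_bound 3 d = 2 + 3 * real d"
  by (simp add: influence_bound_def)

lemma influence_bound_closed_form:
  assumes "real \<Delta> \<noteq> 3"
  defines "r \<equiv> (real \<Delta> - 1) / 2"
  shows "influence_bound \<Delta> d = (real \<Delta> * r ^ d - 3) / (r - 1)"
proof -
  have "r \<noteq> 1" using assms(1) unfolding r_def by simp
  have "(r - 1) * influence_bound \<Delta> d = 2 * (r - 1) + real \<Delta> * ((r - 1) * (\<Sum>k<d. r ^ k))"
    unfolding influence_bound_def r_def by (simp add: algebra_simps)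
  also have "\<dots> = 2 * (r - 1) + real \<Delta> * (r ^ d - 1)"
    by (simp add: power_diff_1_eq)
  also have "\<dots> = real \<Delta> * r ^ d - 3"
    unfolding r_def by (simp add: field_simps)
  finally show ?thesis using \<open>r \<noteq> 1\<close> by (simp add: field_simps)
qed

theorem mainTheorem6:
  fixes V :: "'a set" and E :: "'a \<Rightarrow> 'a \<Rightarrow> bool" and n \<Delta> d :: nat
  assumes "connected_graph V E"
    and "n = card V" and "\<Delta> = max_degree V E" and "d = diameter V E"
  shows "frac_porous_exp_dom V E \<ge> (real d + 3) / 6
    \<and> (\<Delta> = 3 \<longrightarrow> frac_porous_exp_dom V E \<ge> real n / (2 + 3 * real d))
    \<and> (\<Delta> \<ge> 4 \<longrightarrow> frac_porous_exp_dom V E \<ge>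
          (((real \<Delta> - 1) / 2 - 1) / (real \<Delta> * ((real \<Delta> - 1) / 2) ^ d - 3)) * real n)"
proof (intro conjI impI)
  show "frac_porous_exp_dom V E \<ge> (real d + 3) / 6"
    using diameter_lower_bound[OF assms(1)] assms(4) by simp
  have order_bound: "real n / influence_bound \<Delta> d \<le> frac_porous_exp_dom V E" if "\<Delta> \<ge> 1"
    using order_lower_bound[OF assms(1)] that assms(2-4) by simp
  show "frac_porous_exp_dom V E \<ge> real n / (2 + 3 * real d)" if "\<Delta> = 3"
    using order_bound that by (simp add: influence_bound_3)
  show "frac_porous_exp_dom V E \<ge>
      (((real \<Delta> - 1) / 2 - 1) / (real \<Delta> * ((real \<Delta> - 1) / 2) ^ d - 3)) * real n" if "\<Delta> \<ge> 4"
    using order_bound influence_bound_closed_form[of \<Delta> d] that by (simp add: ac_simps)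
qed

end
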